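(* Let $p$ be a prime and $n$ a positive integer with $p<n$. Then $$\mathcal{Q}_n=\mathcal{M}^n+\big(q_{n,p}G_p(X),\,q_{n,p+1}G_{p+1}(X),\dots,q_{n,n-1}G_{n-1}(X)\big),$$ where for $k=p,\dots,n-1$ the integer $q_{n,k}$ is $p^{\,n-v_p((pk)!)}$ if $v_p((pk)!)<n$ and $1$ otherwise. In particular $\mathcal{M}^n$ is strictly contained in $\mathcal{Q}_n$.
   Context: Fix a prime $p$ and $n\geq1$. $\mathcal{M}=(p,X)\subseteq\mathbb{Z}[X]$ and $\mathcal{Q}_n=\bigcap_{i\in\{0,\dots,p^n-1\},\ p\mid i}(p^n,X-i)$, i.e. the set of $f\in\mathbb{Z}[X]$ with $p^n\mid f(i)$ for every integer $i$ divisible by $p$. For $k\geq1$, $G_k(X)=\prod_{h=0}^{k-1}(X-hp)$, and $G_0(X)=1$. $v_p$ is the $p$-adic valuation. *)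

theory Defs
  imports "HOL-Computational_Algebra.Polynomial" "HOL-Computational_Algebra.Primes"
begin

definition zx_ideal_gen :: "int poly set \<Rightarrow> int poly set" where
  "zx_ideal_gen S = {(\<Sum>i<m. a i * g i) | (m::nat) a g. \<forall>i<m. g i \<in> S}"

definition zx_ideal_mult :: "int poly set \<Rightarrow> int poly set \<Rightarrow> int poly set" where
  "zx_ideal_mult I J = zx_ideal_gen {a * b | a b. a \<in> I \<and> b \<in> J}"

primrec zx_ideal_pow :: "int poly set \<Rightarrow> nat \<Rightarrow> int poly set" where
  "zx_ideal_pow I 0 = UNIV"
| "zx_ideal_pow I (Suc k) = zx_ideal_mult (zx_ideal_pow I k) I"

definition zx_ideal_sum :: "int poly set \<Rightarrow> int poly set \<Rightarrow> int poly set" where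
  "zx_ideal_sum I J = zx_ideal_gen (I \<union> J)"

definition idealM :: "nat \<Rightarrow> int poly set" where
  "idealM p = zx_ideal_gen {[:int p:], [:0, 1:]}"

definition idealQ :: "nat \<Rightarrow> nat \<Rightarrow> int poly set" where
  "idealQ p n = (\<Inter>i \<in> {i. i < p ^ n \<and> p dvd i}. zx_ideal_gen {[:int p ^ n:], [:- int i, 1:]})"

definition G :: "nat \<Rightarrow> nat \<Rightarrow> int poly" where
  "G p k = (\<Prod>h<k. [:- (int h * int p), 1:])"

definition qcoef :: "nat \<Rightarrow> nat \<Rightarrow> nat \<Rightarrow> int" where
  "qcoef p n k = (if multiplicity p (fact (p * k) :: nat) < n
                  then int p ^ (n - multiplicity p (fact (p * k) :: nat)) else 1)"

end

theory Submission
  imports Defs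
begin

text \<open>
  Q_n is the set of f with p^n dividing f(pj) for all j \<ge> 0. Expand f = \<Sum> c_k G_k in the
  basis G_0, G_1, ... of Z[X]. Since G_k(pj) = p^k k! (j choose k) is triangular in (k, j),
  f lies in Q_n iff p^n divides c_k p^k k! for every k, i.e. iff q_{n,k} divides c_k, because
  v_p(p^k k!) = v_p((pk)!). For k < p or k \<ge> n the element q_{n,k} G_k = p^(n-k) G_k is a
  product of n elements of M = (p, X), so only p \<le> k < n contributes new generators.
  Conversely every element f of M^n has p^n dividing f(pX), which fails for q_{n,p} G_p:
  the leading coefficient of q_{n,p} G_p(pX) has valuation p + max(0, n - v_p((p^2)!)) < n,
  as v_p((p^2)!) = p + 1.
\<close>

definition is_zx_ideal :: "int poly set \<Rightarrow> bool" where
  "is_zx_ideal I \<longleftrightarrow> 0 \<in> I \<and> (\<forall>a\<in>I. \<forall>b\<in>I. a + b \<in> I) \<and> (\<forall>r. \<forall>a\<in>I. r * a \<in> I)"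

lemma zx_ideal_add_closed: "is_zx_ideal I \<Longrightarrow> a \<in> I \<Longrightarrow> b \<in> I \<Longrightarrow> a + b \<in> I"
  by (auto simp: is_zx_ideal_def)

lemma zx_ideal_mult_closed: "is_zx_ideal I \<Longrightarrow> a \<in> I \<Longrightarrow> r * a \<in> I"
  by (auto simp: is_zx_ideal_def)

lemma zx_ideal_smult_closed: "is_zx_ideal I \<Longrightarrow> a \<in> I \<Longrightarrow> smult c a \<in> I"
  using zx_ideal_mult_closed[of I a "[:c:]"] by simp

lemma zx_ideal_sum_closed:
  "is_zx_ideal I \<Longrightarrow> (\<And>i. i < m \<Longrightarrow> f i \<in> I) \<Longrightarrow> (\<Sum>i<(m::nat). f i) \<in> I"
  by (induction m) (auto simp: is_zx_ideal_def)

lemma zx_ideal_gen_least: "is_zx_ideal I \<Longrightarrow> S \<subseteq> I \<Longrightarrow> zx_ideal_gen S \<subseteq> I"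
  unfolding zx_ideal_gen_def
proof clarify
  fix m :: nat and a g assume I: "is_zx_ideal I" "S \<subseteq> I" "\<forall>i<m. g i \<in> S"
  show "(\<Sum>i<m. a i * g i) \<in> I"
    by (rule zx_ideal_sum_closed[OF I(1)]) (use I in \<open>auto intro: zx_ideal_mult_closed\<close>)
qed

lemma zx_ideal_gen_base: "s \<in> S \<Longrightarrow> s \<in> zx_ideal_gen S"
  unfolding zx_ideal_gen_def
  by (rule CollectI, rule exI[of _ 1], rule exI[of _ "\<lambda>_. 1"], rule exI[of _ "\<lambda>_. s"]) auto

lemma is_zx_ideal_gen: "is_zx_ideal (zx_ideal_gen S)"
  unfolding is_zx_ideal_def
proof (intro conjI ballI allI)
  show "0 \<in> zx_ideal_gen S"
    unfolding zx_ideal_gen_def by (rule CollectI, rule exI[of _ 0]) auto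
next
  fix x y assume "x \<in> zx_ideal_gen S" "y \<in> zx_ideal_gen S"
  then obtain m m' :: nat and a g a' g'
    where x: "x = (\<Sum>i<m. a i * g i)" "\<forall>i<m. g i \<in> S"
      and y: "y = (\<Sum>i<m'. a' i * g' i)" "\<forall>i<m'. g' i \<in> S"
    unfolding zx_ideal_gen_def by blast
  define A where "A i = (if i < m then a i else a' (i - m))" for i
  define B where "B i = (if i < m then g i else g' (i - m))" for i
  have "(\<Sum>i<m+m'. A i * B i) = (\<Sum>i<m. A i * B i) + (\<Sum>i<m'. A (m+i) * B (m+i))"
    by (induction m') (auto simp: ac_simps)
  also have "\<dots> = x + y" unfolding x y A_def B_def by simp
  finally have "x + y = (\<Sum>i<m+m'. A i * B i)" by simp
  moreover have "\<forall>i<m+m'. B i \<in> S" using x y by (auto simp: B_def)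
  ultimately show "x + y \<in> zx_ideal_gen S" unfolding zx_ideal_gen_def by blast
next
  fix r x assume "x \<in> zx_ideal_gen S"
  then obtain m :: nat and a g where x: "x = (\<Sum>i<m. a i * g i)" "\<forall>i<m. g i \<in> S"
    unfolding zx_ideal_gen_def by blast
  have "r * x = (\<Sum>i<m. (r * a i) * g i)" by (simp add: x sum_distrib_left ac_simps)
  with x(2) show "r * x \<in> zx_ideal_gen S"
    unfolding zx_ideal_gen_def by (intro CollectI exI[of _ m] exI[of _ "\<lambda>i. r * a i"] exI[of _ g]) simp
qed

lemma is_zx_ideal_pow: "is_zx_ideal (zx_ideal_pow I k)"
proof (cases k)
  case 0 then show ?thesis by (simp add: is_zx_ideal_def)
next
  case (Suc m) then show ?thesis by (simp add: zx_ideal_mult_def is_zx_ideal_gen)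
qed

lemma prod_in_zx_ideal_pow: "(\<And>i. i < k \<Longrightarrow> x i \<in> I) \<Longrightarrow> (\<Prod>i<k. x i) \<in> zx_ideal_pow I k"
proof (induction k)
  case 0 then show ?case by simp
next
  case (Suc k)
  then have "(\<Prod>i<k. x i) \<in> zx_ideal_pow I k" "x k \<in> I" by auto
  then show ?case unfolding zx_ideal_pow.simps zx_ideal_mult_def
    by (simp only: prod.lessThan_Suc) (rule zx_ideal_gen_base, blast)
qed

lemma poly_diff_dvd:
  fixes x y :: "'a::comm_ring_1"
  shows "(x - y) dvd (poly f x - poly f y)"
proof -
  have "poly f x = poly ([:-y, 1:] * synthetic_div f y + [:poly f y:]) x"
    by (simp only: synthetic_div_correct')
  then have "poly f x - poly f y = (x - y) * poly (synthetic_div f y) x"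
    by (simp add: algebra_simps)
  then show ?thesis by simp
qed

lemma zx_ideal_gen_const_linear_iff:
  "f \<in> zx_ideal_gen {[:c:], [:-a, 1:]} \<longleftrightarrow> c dvd poly f (a::int)"
proof
  have "zx_ideal_gen {[:c:], [:-a, 1:]} \<subseteq> {f. c dvd poly f a}"
    by (rule zx_ideal_gen_least) (auto simp: is_zx_ideal_def)
  then show "f \<in> zx_ideal_gen {[:c:], [:-a, 1:]} \<Longrightarrow> c dvd poly f a" by blast
next
  assume "c dvd poly f a"
  then obtain t where t: "poly f a = c * t" by blast
  have "f = [:-a, 1:] * synthetic_div f a + [:poly f a:]"
    by (simp only: synthetic_div_correct')
  also have "\<dots> = synthetic_div f a * [:-a, 1:] + [:t:] * [:c:]"
    by (simp add: t mult.commute)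
  finally have f: "f = synthetic_div f a * [:-a, 1:] + [:t:] * [:c:]" .
  show "f \<in> zx_ideal_gen {[:c:], [:-a, 1:]}"
    by (subst f, rule zx_ideal_add_closed[OF is_zx_ideal_gen];
        rule zx_ideal_mult_closed[OF is_zx_ideal_gen], rule zx_ideal_gen_base, simp)
qed

definition values_divisible :: "nat \<Rightarrow> nat \<Rightarrow> int poly set" where
  "values_divisible p n = {f. \<forall>j::nat. int p ^ n dvd poly f (int p * int j)}"

lemma is_zx_ideal_values_divisible: "is_zx_ideal (values_divisible p n)"
  unfolding is_zx_ideal_def values_divisible_def by auto

lemma idealQ_eq_values_divisible:
  assumes "prime p" "0 < n"
  shows "idealQ p n = values_divisible p n"
proof
  show "idealQ p n \<subseteq> values_divisible p n"
    unfolding values_divisible_def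
  proof (intro subsetI CollectI allI)
    fix f j assume f: "f \<in> idealQ p n"
    define i where "i = p * (j mod p ^ (n - 1))"
    have pn: "p ^ n = p * p ^ (n - 1)" using assms(2) by (cases n) auto
    have "i < p ^ n" "p dvd i"
      unfolding i_def pn using prime_gt_0_nat[OF assms(1)] by simp_all
    then have "f \<in> zx_ideal_gen {[:int p ^ n:], [:- int i, 1:]}"
      using f unfolding idealQ_def by blast
    then have fi: "int p ^ n dvd poly f (int i)" by (simp add: zx_ideal_gen_const_linear_iff)
    have "j = p ^ (n - 1) * (j div p ^ (n - 1)) + j mod p ^ (n - 1)" by simp
    then have "p * j = p ^ n * (j div p ^ (n - 1)) + i"
      unfolding i_def pn by (metis add_mult_distrib2 mult.assoc)
    then have "int p * int j - int i = int p ^ n * int (j div p ^ (n - 1))"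
      by (metis add_diff_cancel_right' of_nat_add of_nat_mult of_nat_power)
    then have "int p ^ n dvd poly f (int p * int j) - poly f (int i)"
      using poly_diff_dvd dvd_trans by (metis dvd_triv_left)
    with fi show "int p ^ n dvd poly f (int p * int j)"
      by (metis diff_add_cancel dvd_add)
  qed
  show "values_divisible p n \<subseteq> idealQ p n"
    unfolding idealQ_def
  proof (intro subsetI InterI, clarify)
    fix f i assume "f \<in> values_divisible p n" "p dvd i"
    moreover obtain j where "i = p * j" using \<open>p dvd i\<close> by blast
    ultimately have "int p ^ n dvd poly f (int i)" by (simp add: values_divisible_def)
    then show "f \<in> zx_ideal_gen {[:int p ^ n:], [:- int i, 1:]}"
      by (simp add: zx_ideal_gen_const_linear_iff)
  qed
qed

definition rescaling_divisible :: "nat \<Rightarrow> nat \<Rightarrow> int poly set" where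
  "rescaling_divisible p n = {f. [:int p ^ n:] dvd f \<circ>\<^sub>p [:0, int p:]}"

lemma is_zx_ideal_rescaling_divisible: "is_zx_ideal (rescaling_divisible p n)"
  unfolding is_zx_ideal_def rescaling_divisible_def by (auto simp: pcompose_add pcompose_mult)

lemma rescaling_divisible_mult:
  assumes "f \<in> rescaling_divisible p a" "g \<in> rescaling_divisible p b"
  shows "f * g \<in> rescaling_divisible p (a + b)"
proof -
  have "[:int p ^ a:] * [:int p ^ b:] dvd (f \<circ>\<^sub>p [:0, int p:]) * (g \<circ>\<^sub>p [:0, int p:])"
    using assms unfolding rescaling_divisible_def by (blast intro: mult_dvd_mono)
  then show ?thesis unfolding rescaling_divisible_def by (simp add: pcompose_mult power_add mult_ac)
qed

lemma idealM_subset_rescaling_divisible: "idealM p \<subseteq> rescaling_divisible p 1"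
  unfolding idealM_def
proof (rule zx_ideal_gen_least[OF is_zx_ideal_rescaling_divisible])
  have "[:0, int p:] = [:int p:] * [:0, 1:]" by simp
  then have "[:int p:] dvd [:0, int p:]" by (metis dvd_triv_left)
  then show "{[:int p:], [:0, 1:]} \<subseteq> rescaling_divisible p 1"
    by (simp add: rescaling_divisible_def pcompose_pCons)
qed

lemma zx_ideal_pow_idealM_subset: "zx_ideal_pow (idealM p) k \<subseteq> rescaling_divisible p k"
proof (induction k)
  case 0
  show ?case by (auto simp: rescaling_divisible_def one_pCons[symmetric])
next
  case (Suc k)
  show ?case unfolding zx_ideal_pow.simps zx_ideal_mult_def
  proof (rule zx_ideal_gen_least[OF is_zx_ideal_rescaling_divisible], clarify)
    fix a b assume "a \<in> zx_ideal_pow (idealM p) k" "b \<in> idealM p"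
    then show "a * b \<in> rescaling_divisible p (Suc k)"
      using Suc.IH idealM_subset_rescaling_divisible rescaling_divisible_mult[of a p k b 1] by auto
  qed
qed

lemma rescaling_divisible_subset: "rescaling_divisible p n \<subseteq> values_divisible p n"
proof
  fix f assume "f \<in> rescaling_divisible p n"
  then obtain h where h: "f \<circ>\<^sub>p [:0, int p:] = [:int p ^ n:] * h"
    unfolding rescaling_divisible_def by blast
  have "poly f (int p * int j) = int p ^ n * poly h (int j)" for j
    using arg_cong[OF h, of "\<lambda>q. poly q (int j)"] by (simp add: poly_pcompose mult.commute)
  then show "f \<in> values_divisible p n" by (simp add: values_divisible_def)
qed

lemma rescaling_divisible_coeff:
  "f \<in> rescaling_divisible p n \<Longrightarrow> int p ^ n dvd int p ^ i * coeff f i"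
  unfolding rescaling_divisible_def const_poly_dvd_iff by (metis coeff_pcompose_linear mem_Collect_eq)

lemma G_Suc: "G p (Suc k) = G p k * [:- (int k * int p), 1:]"
  by (simp add: G_def)

lemma degree_G: "degree (G p k) = k"
  and lead_coeff_G: "lead_coeff (G p k) = 1"
proof (induction k)
  case 0
  show "degree (G p 0) = 0" "lead_coeff (G p 0) = 1" by (simp_all add: G_def)
next
  case (Suc k)
  then have "G p k \<noteq> 0" by auto
  then have "degree (G p k * [:- (int k * int p), 1:]) = degree (G p k) + 1"
    by (subst degree_mult_eq) auto
  then show "degree (G p (Suc k)) = Suc k" using Suc by (simp only: G_Suc)
  show "lead_coeff (G p (Suc k)) = 1" using Suc by (simp only: G_Suc lead_coeff_mult) simp
qed

lemma monic_basis_expansion: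
  fixes B :: "nat \<Rightarrow> 'a::comm_ring_1 poly"
  assumes "\<And>k. degree (B k) = k" "\<And>k. lead_coeff (B k) = 1"
  shows "degree f \<le> d \<Longrightarrow> \<exists>c. f = (\<Sum>k<Suc d. smult (c k) (B k))"
proof (induction d arbitrary: f)
  case 0
  then have "f = [:coeff f 0:]" by (metis degree_0_id le_zero_eq)
  moreover have "B 0 = 1" using assms[of 0] by (metis degree_0_id one_pCons)
  ultimately show ?case by (intro exI[of _ "\<lambda>_. coeff f 0"]) simp
next
  case (Suc d)
  define g where "g = f - smult (coeff f (Suc d)) (B (Suc d))"
  have "degree g \<le> d"
  proof (rule degree_le, intro allI impI)
    fix i assume "d < i"
    show "coeff g i = 0"
    proof (cases "i = Suc d")
      case True then show ?thesis using assms(2)[of "Suc d"] by (simp add: g_def assms(1))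
    next
      case False
      with \<open>d < i\<close> Suc.prems have "degree f < i" "degree (B (Suc d)) < i" by (auto simp: assms(1))
      then show ?thesis by (simp add: g_def coeff_eq_0)
    qed
  qed
  then obtain c where c: "g = (\<Sum>k<Suc d. smult (c k) (B k))" using Suc.IH by blast
  define c' where "c' = c(Suc d := coeff f (Suc d))"
  have "f = g + smult (coeff f (Suc d)) (B (Suc d))" by (simp add: g_def)
  also have "\<dots> = (\<Sum>k<Suc (Suc d). smult (c' k) (B k))"
    unfolding c by (simp add: c'_def)
  finally show ?case by blast
qed

lemma prod_diff_eq_fact_choose: "(\<Prod>h<k. int j - int h) = fact k * int (j choose k)"
proof (induction k)
  case 0 show ?case by simp
next
  case (Suc k)
  have "int (j choose k) * (int j - int k) = int (Suc k) * int (j choose Suc k)"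
  proof (cases "k \<le> j")
    case True
    have "(j - k) * (j choose k) = Suc k * (j choose Suc k)"
      by (metis binomial_absorb_comp binomial_absorption)
    with True show ?thesis by (metis mult.commute of_nat_diff of_nat_mult)
  next
    case False
    then show ?thesis by (simp add: binomial_eq_0)
  qed
  then show ?case by (simp add: Suc.IH fact_Suc)
qed

lemma poly_G_multiple: "poly (G p k) (int p * int j) = int p ^ k * fact k * int (j choose k)"
proof -
  have "poly (G p k) (int p * int j) = (\<Prod>h<k. int p * (int j - int h))"
    unfolding G_def by (simp add: poly_prod algebra_simps)
  also have "\<dots> = int p ^ k * (\<Prod>h<k. int j - int h)" by (simp add: prod.distrib)
  finally show ?thesis by (simp add: prod_diff_eq_fact_choose)
qed

lemma const_p_in_idealM: "[:int p:] \<in> idealM p"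
  unfolding idealM_def by (rule zx_ideal_gen_base) simp

lemma linear_factor_in_idealM: "[:- (int h * int p), 1:] \<in> idealM p"
proof -
  have "[:- (int h * int p), 1:] = [:0, 1:] + [:- int h:] * [:int p:]" by simp
  also have "\<dots> \<in> idealM p"
    unfolding idealM_def
    by (intro zx_ideal_add_closed[OF is_zx_ideal_gen] zx_ideal_mult_closed[OF is_zx_ideal_gen])
       (simp_all add: zx_ideal_gen_base)
  finally show ?thesis .
qed

lemma smult_power_G_in_idealM_pow: "smult (int p ^ (n - k)) (G p k) \<in> zx_ideal_pow (idealM p) n"
proof -
  have le: "smult (int p ^ (n - k)) (G p k) \<in> zx_ideal_pow (idealM p) n" if "k \<le> n" for k
  proof -
    define x where "x i = (if i < k then [:- (int i * int p), 1:] else [:int p:])" for i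
    have "(\<Prod>i<n. x i) \<in> zx_ideal_pow (idealM p) n"
      by (rule prod_in_zx_ideal_pow) (simp add: x_def linear_factor_in_idealM const_p_in_idealM)
    moreover have "(\<Prod>i<n. x i) = (\<Prod>i<k. x i) * (\<Prod>i\<in>{k..<n}. x i)"
      using that by (metis atLeast0LessThan prod.atLeastLessThan_concat zero_le)
    moreover have "(\<Prod>i<k. x i) = G p k" unfolding G_def x_def by (rule prod.cong) auto
    moreover have "(\<Prod>i\<in>{k..<n}. x i) = [:int p ^ (n - k):]"
      unfolding x_def by (simp add: poly_const_pow)
    ultimately show ?thesis by (simp add: mult.commute)
  qed
  show ?thesis
  proof (cases "k \<le> n")
    case True then show ?thesis by (rule le)
  next
    case False
    then have "G p k = G p n * (\<Prod>h\<in>{n..<k}. [:- (int h * int p), 1:])"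
      unfolding G_def by (metis atLeast0LessThan nat_le_linear prod.atLeastLessThan_concat zero_le)
    then show ?thesis using False le[of n]
      by (simp add: zx_ideal_mult_closed[OF is_zx_ideal_pow] mult.commute[of "G p n"])
  qed
qed

lemma fact_add_below_prime:
  assumes "prime p" "r < p"
  shows "\<exists>w. fact (p * k + r) = fact (p * k) * w \<and> \<not> p dvd w"
  using assms(2)
proof (induction r)
  case 0 then show ?case using prime_gt_1_nat[OF assms(1)] by (intro exI[of _ 1]) simp
next
  case (Suc r)
  then obtain w where w: "fact (p * k + r) = fact (p * k) * w" "\<not> p dvd w" by auto
  have "\<not> p dvd p * k + Suc r"
  proof
    assume "p dvd p * k + Suc r"
    then have "p dvd Suc r" by (metis add_Suc_right dvd_add_right_iff dvd_triv_left)
    with Suc.prems show False by (auto dest: dvd_imp_le)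
  qed
  with w(2) assms(1) have "\<not> p dvd (p * k + Suc r) * w" using prime_dvd_mult_iff by blast
  moreover have "fact (p * k + Suc r) = fact (p * k) * ((p * k + Suc r) * w)"
    using w(1) by (simp add: algebra_simps)
  ultimately show ?case by blast
qed

lemma fact_mult_prime_decompose:
  assumes "prime p"
  shows "\<exists>u. fact (p * k) = p ^ k * fact k * u \<and> \<not> p dvd u"
proof (induction k)
  case 0 then show ?case using prime_gt_1_nat[OF assms] by (intro exI[of _ 1]) simp
next
  case (Suc k)
  then obtain u where u: "fact (p * k) = p ^ k * fact k * u" "\<not> p dvd u" by auto
  have p1: "1 \<le> p" using prime_gt_0_nat[OF assms] by simp
  obtain w where w: "fact (p * k + (p - 1)) = fact (p * k) * w" "\<not> p dvd w"
    using fact_add_below_prime[OF assms, of "p - 1" k] p1 by auto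
  have e: "p * Suc k = Suc (p * k + (p - 1))" using p1 by simp
  have "fact (p * Suc k) = p * Suc k * fact (p * k + (p - 1))"
    by (subst (1 2) e) (simp only: fact_Suc of_nat_id)
  also have "\<dots> = p ^ Suc k * fact (Suc k) * (u * w)"
    by (simp only: w(1) u(1)) (simp add: algebra_simps)
  finally show ?case using u(2) w(2) assms by (intro exI[of _ "u * w"]) (simp add: prime_dvd_mult_iff)
qed

lemma multiplicity_fact_mult_prime:
  assumes "prime p"
  shows "multiplicity p (fact (p * k) :: nat) = k + multiplicity p (fact k :: nat)"
proof -
  obtain u where u: "fact (p * k) = p ^ k * fact k * u" "\<not> p dvd u"
    using fact_mult_prime_decompose[OF assms] by blast
  have pe: "prime_elem p" using assms by simp
  have "u \<noteq> 0" using u(2) by (metis dvd_0_right)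
  then have nz: "p ^ k \<noteq> 0" "fact k \<noteq> (0::nat)" "u \<noteq> 0"
    using prime_gt_0_nat[OF assms] by auto
  have "multiplicity p (p ^ k * fact k * u) = multiplicity p (p ^ k) + multiplicity p (fact k :: nat) + multiplicity p u"
    using nz by (simp add: prime_elem_multiplicity_mult_distrib[OF pe])
  also have "\<dots> = k + multiplicity p (fact k :: nat)"
    using pe u(2) by (simp add: not_dvd_imp_multiplicity_0)
  finally show ?thesis by (simp only: u(1))
qed

lemma qcoef_eq:
  assumes "prime p"
  shows "qcoef p n k = int p ^ (n - (k + multiplicity p (fact k :: nat)))"
  unfolding qcoef_def multiplicity_fact_mult_prime[OF assms] by simp

lemma qcoef_eq_power:
  assumes "prime p" "k < p \<or> n \<le> k"
  shows "qcoef p n k = int p ^ (n - k)"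
  using assms(2)
proof
  assume "k < p"
  then have "multiplicity p (fact k :: nat) = 0"
    using assms(1) by (simp add: not_dvd_imp_multiplicity_0 prime_dvd_fact_iff)
  then show ?thesis by (simp add: qcoef_eq[OF assms(1)])
next
  assume "n \<le> k"
  then show ?thesis by (simp add: qcoef_eq[OF assms(1)])
qed

lemma prime_power_dvd_mult_iff:
  fixes p c y :: int
  assumes "prime p" "\<not> p dvd y"
  shows "p ^ n dvd c * (p ^ v * y) \<longleftrightarrow> p ^ (n - v) dvd c"
proof -
  have "coprime (p ^ n) y" using assms by (simp add: prime_imp_coprime)
  then have "p ^ n dvd c * (p ^ v * y) \<longleftrightarrow> p ^ n dvd c * p ^ v"
    by (metis coprime_dvd_mult_left_iff mult.assoc)
  also have "\<dots> \<longleftrightarrow> p ^ (n - v) dvd c"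
  proof (cases "v \<le> n")
    case True
    then have "p ^ n = p ^ (n - v) * p ^ v" by (metis le_add_diff_inverse2 power_add)
    moreover have "p ^ v \<noteq> 0" using assms(1) by auto
    ultimately show ?thesis by (metis dvd_mult_cancel_right)
  next
    case False
    then have "p ^ n dvd c * p ^ v" by (simp add: le_imp_power_dvd dvd_mult)
    with False show ?thesis by simp
  qed
  finally show ?thesis .
qed

lemma power_dvd_mult_iff_qcoef_dvd:
  assumes "prime p"
  shows "int p ^ n dvd c * (int p ^ k * fact k) \<longleftrightarrow> qcoef p n k dvd c"
proof -
  define m where "m = multiplicity p (fact k :: nat)"
  obtain y where y: "fact k = p ^ m * y" "\<not> p dvd y"
    using multiplicity_decompose'[of "fact k :: nat" p] assms unfolding m_def
    by (metis fact_nonzero not_prime_unit)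
  have "(fact k :: int) = int p ^ m * int y"
    using arg_cong[OF y(1), of int] by simp
  then have "int p ^ k * fact k = int p ^ (k + m) * int y"
    by (simp add: power_add mult.assoc)
  moreover have "prime (int p)" "\<not> int p dvd int y" using assms y(2) by simp_all
  ultimately show ?thesis
    unfolding qcoef_eq[OF assms] m_def[symmetric]
    using prime_power_dvd_mult_iff[where n=n and c=c and v="k + m"] by simp
qed

lemma qcoef_dvd_expansion_coeff:
  assumes "prime p" "f = (\<Sum>i<N. smult (c i) (G p i))" "f \<in> values_divisible p n" "k < N"
  shows "qcoef p n k dvd c k"
  using assms(4)
proof (induction k rule: less_induct)
  case (less k)
  \<comment> \<open>the value at pk is t k plus terms that are 0 (i > k) or divisible by p^n by induction (i < k)\<close>
  define t where "t i = c i * (int p ^ i * fact i) * int (k choose i)" for i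
  have "int p ^ n dvd t i" if "i \<in> {..<N} - {k}" for i
  proof (cases "i < k")
    case True
    with less.IH that have "int p ^ n dvd c i * (int p ^ i * fact i)"
      by (simp add: power_dvd_mult_iff_qcoef_dvd[OF assms(1)])
    then show ?thesis by (simp add: t_def)
  next
    case False
    with that have "k < i" by auto
    then show ?thesis by (simp add: t_def binomial_eq_0)
  qed
  then have rest: "int p ^ n dvd (\<Sum>i\<in>{..<N} - {k}. t i)" by (rule dvd_sum)
  have "int p ^ n dvd poly f (int p * int k)"
    using assms(3) unfolding values_divisible_def by blast
  also have "poly f (int p * int k) = (\<Sum>i<N. c i * poly (G p i) (int p * int k))"
    by (simp add: assms(2) poly_sum)
  also have "\<dots> = (\<Sum>i<N. t i)"
    unfolding poly_G_multiple t_def by (simp add: mult_ac)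
  also have "\<dots> = t k + (\<Sum>i\<in>{..<N} - {k}. t i)"
    using less.prems by (simp add: sum.remove)
  finally have "int p ^ n dvd t k" using rest by (simp add: dvd_add_left_iff)
  then show ?case by (simp add: t_def power_dvd_mult_iff_qcoef_dvd[OF assms(1)])
qed

lemma smult_qcoef_G_values_divisible:
  assumes "prime p"
  shows "smult (qcoef p n k) (G p k) \<in> values_divisible p n"
proof -
  have "int p ^ n dvd qcoef p n k * (int p ^ k * fact k)"
    by (simp add: power_dvd_mult_iff_qcoef_dvd[OF assms])
  then have "int p ^ n dvd qcoef p n k * (int p ^ k * fact k) * int (j choose k)" for j
    by (rule dvd_mult2)
  then show ?thesis
    by (simp add: values_divisible_def poly_G_multiple mult.assoc)
qed

lemma smult_qcoef_G_not_rescaling_divisible: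
  assumes "prime p" "p < n"
  shows "smult (qcoef p n p) (G p p) \<notin> rescaling_divisible p n"
proof
  define m where "m = multiplicity p (fact p :: nat)"
  assume "smult (qcoef p n p) (G p p) \<in> rescaling_divisible p n"
  then have "int p ^ n dvd int p ^ p * coeff (smult (qcoef p n p) (G p p)) p"
    by (rule rescaling_divisible_coeff)
  also have "int p ^ p * coeff (smult (qcoef p n p) (G p p)) p = int (p ^ (p + (n - (p + m))))"
    using lead_coeff_G[of p p] by (simp add: degree_G qcoef_eq[OF assms(1)] m_def power_add)
  finally have "p ^ n dvd p ^ (p + (n - (p + m)))"
    by (metis int_dvd_int_iff of_nat_power)
  then have "n \<le> p + (n - (p + m))"
    using prime_gt_1_nat[OF assms(1)] by (rule power_dvd_imp_le)
  moreover have "0 < m"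
    using multiplicity_gt_zero_iff[of "fact p :: nat" p] prime_gt_1_nat[OF assms(1)]
    by (simp add: m_def dvd_fact)
  ultimately show False using assms(2) by linarith
qed

lemma smult_qcoef_G_mem_sum:
  assumes "prime p"
  shows "smult (qcoef p n k) (G p k) \<in> zx_ideal_sum (zx_ideal_pow (idealM p) n)
           (zx_ideal_gen {smult (qcoef p n k) (G p k) | k. p \<le> k \<and> k \<le> n - 1})"
  unfolding zx_ideal_sum_def
proof (rule zx_ideal_gen_base)
  show "smult (qcoef p n k) (G p k) \<in> zx_ideal_pow (idealM p) n \<union>
          zx_ideal_gen {smult (qcoef p n k) (G p k) | k. p \<le> k \<and> k \<le> n - 1}"
  proof (cases "p \<le> k \<and> k \<le> n - 1")
    case True
    then show ?thesis by (intro UnI2 zx_ideal_gen_base) blast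
  next
    case False
    then have "k < p \<or> n \<le> k" by linarith
    then show ?thesis
      by (intro UnI1) (simp only: qcoef_eq_power[OF assms] smult_power_G_in_idealM_pow)
  qed
qed

lemma values_divisible_subset_sum:
  assumes "prime p"
  shows "values_divisible p n \<subseteq> zx_ideal_sum (zx_ideal_pow (idealM p) n)
           (zx_ideal_gen {smult (qcoef p n k) (G p k) | k. p \<le> k \<and> k \<le> n - 1})"
    (is "_ \<subseteq> ?R")
proof
  have R: "is_zx_ideal ?R" unfolding zx_ideal_sum_def by (rule is_zx_ideal_gen)
  fix f assume f: "f \<in> values_divisible p n"
  obtain c where c: "f = (\<Sum>k<Suc (degree f). smult (c k) (G p k))"
    using monic_basis_expansion[OF degree_G[of p] lead_coeff_G[of p] order_refl] by blast
  have "smult (c k) (G p k) \<in> ?R" if "k < Suc (degree f)" for k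
  proof -
    from qcoef_dvd_expansion_coeff[OF assms c f that]
    obtain t where "c k = qcoef p n k * t" by (rule dvdE)
    then have "smult (c k) (G p k) = smult t (smult (qcoef p n k) (G p k))"
      by (simp add: mult.commute)
    then show ?thesis
      using zx_ideal_smult_closed[OF R smult_qcoef_G_mem_sum[OF assms]] by simp
  qed
  then show "f \<in> ?R" by (subst c) (rule zx_ideal_sum_closed[OF R])
qed

theorem mainTheorem15:
  fixes p n :: nat
  assumes "prime p" and "0 < n" and "p < n"
  shows "idealQ p n = zx_ideal_sum (zx_ideal_pow (idealM p) n)
                        (zx_ideal_gen {smult (qcoef p n k) (G p k) | k. p \<le> k \<and> k \<le> n - 1})
         \<and> zx_ideal_pow (idealM p) n \<subset> idealQ p n"
proof -
  let ?P = "zx_ideal_pow (idealM p) n"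
  let ?J = "{smult (qcoef p n k) (G p k) | k. p \<le> k \<and> k \<le> n - 1}"
  have Q: "idealQ p n = values_divisible p n"
    using idealQ_eq_values_divisible[OF assms(1,2)] .
  have P: "?P \<subseteq> values_divisible p n"
    using zx_ideal_pow_idealM_subset rescaling_divisible_subset by blast
  have "zx_ideal_sum ?P (zx_ideal_gen ?J) \<subseteq> values_divisible p n"
    unfolding zx_ideal_sum_def
  proof (rule zx_ideal_gen_least[OF is_zx_ideal_values_divisible], rule Un_least)
    show "zx_ideal_gen ?J \<subseteq> values_divisible p n"
      by (rule zx_ideal_gen_least[OF is_zx_ideal_values_divisible])
         (auto simp: smult_qcoef_G_values_divisible[OF assms(1)])
  qed (rule P)
  moreover have "smult (qcoef p n p) (G p p) \<in> values_divisible p n - ?P"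
    using smult_qcoef_G_values_divisible[OF assms(1)] zx_ideal_pow_idealM_subset
      smult_qcoef_G_not_rescaling_divisible[OF assms(1,3)] by blast
  ultimately show ?thesis
    using Q P values_divisible_subset_sum[OF assms(1)] by blast
qed

end
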